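(* Let $q$ be a prime power with $q\equiv 1 \pmod 3$, and let $\pi,\sigma$ be vertices of the graph $C_A(q)$, with $\sigma(x)=ax+r$ and $\pi(x)=bx+s$ ($a,b\in GF(q)\setminus\{0\}$, $r,s\in GF(q)$). (a) If $a\neq b$, then $hd(\pi,\sigma)=q-1$. (b) If $\pi(F)=F$, then $\pi$ is an isolated vertex of $C_A(q)$. There are exactly $q-1$ elements $\pi\in AGL(1,q)$ with $\pi(F)=F$. (c) If $\pi$ and $\sigma$ are adjacent in $C_A(q)$, then $hd(\pi,\sigma)=q-1$, $hd(\pi^{\triangle},\sigma^{\triangle})=hd(\pi,\sigma)-3$, and $a/b$ and $b/a$ are the two distinct roots in $GF(q)$ of $t^2+t+1=0$.
   Context: $AGL(1,q)=\{x\mapsto ax+b: a\in GF(q)\setminus\{0\}, b\in GF(q)\}$, acting on $GF(q)$. For permutations $\pi,\sigma$ of a finite set, $hd(\pi,\sigma)$ is the number of points at which they differ. Fix a distinguished element $F\in GF(q)$. For a permutation $\pi$ of $GF(q)$, $\pi^{\triangle}$ is the permutation with $\pi^{\triangle}(\pi^{-1}(F))=\pi(F)$, $\pi^{\triangle}(F)=F$, and $\pi^{\triangle}(x)=\pi(x)$ otherwise. The contraction graph $C_A(q)$ has vertex set $AGL(1,q)$, with distinct $\pi,\sigma$ adjacent iff $hd(\pi^{\triangle},\sigma^{\triangle})=q-4$. *)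

theory Defs
  imports Main
begin

text \<open>GF(q) is modelled as a finite field type 'a with CARD('a) = q.\<close>

definition AGL :: "('a::{field,finite} \<Rightarrow> 'a) set" where
  "AGL = {f. \<exists>a b. a \<noteq> 0 \<and> f = (\<lambda>x. a * x + b)}"

definition hd :: "('a \<Rightarrow> 'b) \<Rightarrow> ('a \<Rightarrow> 'b) \<Rightarrow> nat" where
  "hd p s = card {x. p x \<noteq> s x}"

definition contr :: "'a \<Rightarrow> ('a \<Rightarrow> 'a) \<Rightarrow> ('a \<Rightarrow> 'a)" where
  "contr F p = (\<lambda>x. if x = F then F else if x = inv p F then p F else p x)"

definition CA_adj :: "'a::{field,finite} \<Rightarrow> ('a \<Rightarrow> 'a) \<Rightarrow> ('a \<Rightarrow> 'a) \<Rightarrow> bool" where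
  "CA_adj F p s \<longleftrightarrow> p \<in> AGL \<and> s \<in> AGL \<and> p \<noteq> s \<and>
     hd (contr F p) (contr F s) = card (UNIV :: 'a set) - 4"

end

theory Submission
  imports Defs "HOL-Number_Theory.Residues"
begin

text \<open>Away from F, the contractions of \<pi> and \<sigma> agree only at the two preimages of F
  and where \<pi> and \<sigma> agree, and two distinct affine maps agree at most once. So four
  agreement points of the contractions force F, \<pi>\<inverse>(F), \<sigma>\<inverse>(F) and the common point of
  \<pi> and \<sigma> to be four distinct points, all of them agreement points. In particular
  \<pi>(F) \<noteq> F, and \<pi>(F) = \<sigma>(\<pi>\<inverse>(F)), \<sigma>(F) = \<pi>(\<sigma>\<inverse>(F)); for affine maps these two
  equations say that the ratio of the slopes is a root of t^2 + t + 1, whose roots are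
  mutually inverse and distinct because 3 \<noteq> 0 when q \<equiv> 1 (mod 3).\<close>

lemma of_nat_neq_0_if_card_mod_eq_1:
  assumes "card (UNIV :: 'a::{field,finite} set) mod n = 1"
  shows "of_nat n \<noteq> (0::'a)"
proof
  assume "of_nat n = (0::'a)"
  hence "CHAR('a) dvd n" by (simp only: of_nat_eq_0_iff_char_dvd)
  hence "CHAR('a) dvd card (UNIV :: 'a set) mod n"
    using CHAR_dvd_CARD by (simp add: dvd_mod_iff)
  thus False using assms by simp
qed

lemma card_ge_4_if_card_mod_3:
  assumes "card (UNIV :: 'a::{field,finite} set) mod 3 = 1"
  shows "card (UNIV :: 'a set) \<ge> 4"
proof -
  have "card {0::'a, 1} \<le> card (UNIV :: 'a set)" by (rule card_mono) auto
  with assms show ?thesis by simp presburger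
qed

lemma hd_eq_card_diff_agree:
  fixes f g :: "'a::finite \<Rightarrow> 'b"
  shows "hd f g = card (UNIV :: 'a set) - card {x. f x = g x}"
proof -
  have "{x. f x \<noteq> g x} = UNIV - {x. f x = g x}" by auto
  thus ?thesis unfolding hd_def by (simp add: card_Diff_subset)
qed

lemma card_agree_eq_if_hd_eq:
  fixes f g :: "'a::finite \<Rightarrow> 'b"
  assumes "hd f g = card (UNIV :: 'a set) - k" and "k \<le> card (UNIV :: 'a set)"
  shows "card {x. f x = g x} = k"
proof -
  have "card {x. f x = g x} \<le> card (UNIV :: 'a set)" by (rule card_mono) auto
  thus ?thesis using assms unfolding hd_eq_card_diff_agree by linarith
qed

lemma contr_agree_subset:
  "{x. contr F p x = contr F s x} \<subseteq> {F, inv_into UNIV p F, inv_into UNIV s F} \<union> {x. p x = s x}"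
  unfolding contr_def by auto

lemma contr_agree_card_4:
  fixes p s :: "'a::finite \<Rightarrow> 'a"
  assumes le1: "card {x. p x = s x} \<le> 1"
    and four: "card {x. contr F p x = contr F s x} = 4"
  shows "card {x. p x = s x} = 1" and "inv_into UNIV p F \<noteq> F" and "inv_into UNIV p F \<noteq> inv_into UNIV s F"
    and "p F = s (inv_into UNIV p F)" and "s F = p (inv_into UNIV s F)"
proof -
  let ?E = "{x. contr F p x = contr F s x}" and ?D = "{x. p x = s x}"
  let ?u = "inv_into UNIV p F" and ?v = "inv_into UNIV s F"
  have "4 \<le> card ({F, ?u, ?v} \<union> ?D)"
    using card_mono[OF finite contr_agree_subset[of F p s]] four by simp
  also have "\<dots> \<le> card {F, ?u, ?v} + card ?D" by (rule card_Un_le)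
  also have "\<dots> \<le> 3 + card ?D" by (simp add: card_insert_if)
  finally show "card ?D = 1" using le1 by linarith
  then obtain P where "?D = {P}" by (auto simp: card_Suc_eq)
  hence sub: "?E \<subseteq> {F, ?u, ?v, P}" using contr_agree_subset[of F p s] by blast
  moreover have "card {F, ?u, ?v, P} \<le> 4" by (simp add: card_insert_if)
  ultimately have "card {F, ?u, ?v, P} = 4" using card_mono[OF finite] four by (metis le_antisym)
  hence dist: "F \<noteq> ?u" "F \<noteq> ?v" "?u \<noteq> ?v"
    by (auto simp: card_insert_if split: if_splits)
  thus "?u \<noteq> F" "?u \<noteq> ?v" by auto
  have "?E = {F, ?u, ?v, P}"
    using card_subset_eq[OF finite sub] four \<open>card {F, ?u, ?v, P} = 4\<close> by simp
  hence "?u \<in> ?E" "?v \<in> ?E" by auto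
  thus "p F = s ?u" "s F = p ?v" using dist unfolding contr_def by auto
qed

lemma affine_eq_iff_of_slopes_neq:
  fixes a b c d x :: "'a::field"
  assumes "a \<noteq> c"
  shows "a * x + b = c * x + d \<longleftrightarrow> x = (d - b) / (a - c)"
  using assms by (auto simp: field_simps)

lemma hd_affine_if_slopes_neq:
  fixes a b r s :: "'a::{field,finite}"
  assumes "a \<noteq> b"
  shows "hd (\<lambda>x. b * x + s) (\<lambda>x. a * x + r) = card (UNIV :: 'a set) - 1"
  using assms unfolding hd_eq_card_diff_agree affine_eq_iff_of_slopes_neq[OF assms[symmetric]] by simp

lemma card_agree_le_1_if_AGL:
  fixes p t :: "'a::{field,finite} \<Rightarrow> 'a"
  assumes "p \<in> AGL" and "t \<in> AGL" and "p \<noteq> t"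
  shows "card {x. p x = t x} \<le> 1"
proof -
  obtain a b c d where p: "p = (\<lambda>x. a * x + b)" and t: "t = (\<lambda>x. c * x + d)"
    using assms(1,2) unfolding AGL_def by blast
  show ?thesis
  proof (cases "a = c")
    case True
    with assms(3) have "{x. p x = t x} = {}" unfolding p t by auto
    thus ?thesis by simp
  next
    case False
    thus ?thesis unfolding p t affine_eq_iff_of_slopes_neq[OF False] by simp
  qed
qed

lemma CA_adj_swaps_preimages:
  fixes F :: "'a::{field,finite}"
  assumes "card (UNIV :: 'a set) \<ge> 4" and "CA_adj F p t"
  shows "card {x. p x = t x} = 1" and "inv_into UNIV p F \<noteq> F"
    and "inv_into UNIV p F \<noteq> inv_into UNIV t F"
    and "p F = t (inv_into UNIV p F)" and "t F = p (inv_into UNIV t F)"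
proof -
  have "card {x. p x = t x} \<le> 1"
    using assms(2) unfolding CA_adj_def by (intro card_agree_le_1_if_AGL) auto
  moreover have "card {x. contr F p x = contr F t x} = 4"
    using assms unfolding CA_adj_def by (intro card_agree_eq_if_hd_eq) auto
  ultimately show "card {x. p x = t x} = 1" and "inv_into UNIV p F \<noteq> F"
    and "inv_into UNIV p F \<noteq> inv_into UNIV t F"
    and "p F = t (inv_into UNIV p F)" and "t F = p (inv_into UNIV t F)"
    by (rule contr_agree_card_4)+
qed

lemma inj_affine: "(b::'a::field) \<noteq> 0 \<Longrightarrow> inj (\<lambda>x. b * x + s)"
  by (auto intro: injI)

lemma inv_affine:
  fixes b s y :: "'a::field"
  assumes "b \<noteq> 0"
  shows "inv_into UNIV (\<lambda>x. b * x + s) y = (y - s) / b"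
  by (rule inv_f_eq[OF inj_affine[OF assms]]) (use assms in simp)

lemma card_AGL_fixing:
  "card {p \<in> (AGL :: ('a::{field,finite} \<Rightarrow> 'a) set). p F = F} = card (UNIV :: 'a set) - 1"
proof -
  define h where "h = (\<lambda>a::'a. \<lambda>x. a * x + (F - a * F))"
  have "{p \<in> AGL. p F = F} = h ` (UNIV - {0})"
  proof
    show "{p \<in> AGL. p F = F} \<subseteq> h ` (UNIV - {0})"
    proof
      fix p assume "p \<in> {p \<in> AGL. p F = F}"
      then obtain a b where "a \<noteq> 0" "p = (\<lambda>x. a * x + b)" "a * F + b = F"
        unfolding AGL_def by auto
      moreover from this have "b = F - a * F" by (simp add: algebra_simps)
      ultimately have "p = h a" unfolding h_def by simp
      thus "p \<in> h ` (UNIV - {0})" using \<open>a \<noteq> 0\<close> by auto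
    qed
    show "h ` (UNIV - {0}) \<subseteq> {p \<in> AGL. p F = F}"
      unfolding h_def AGL_def by auto
  qed
  moreover have "inj h"
  proof (rule injI)
    fix a c assume "h a = h c"
    hence "h a (F + 1) = h c (F + 1)" by simp
    thus "a = c" unfolding h_def by (simp add: algebra_simps)
  qed
  ultimately show ?thesis by (simp add: card_image inj_on_subset card_Diff_singleton)
qed

lemma slope_ratio_root_if_swap_preimages:
  fixes a b r s u v F :: "'a::field"
  assumes b0: "b \<noteq> 0" and uv: "u \<noteq> v"
    and u: "b * u + s = F" and v: "a * v + r = F"
    and \<pi>F: "b * F + s = a * u + r" and \<sigma>F: "a * F + r = b * v + s"
  shows "(a / b)^2 + a / b + 1 = 0"
proof -
  have e1: "b * (F - u) = a * (u - v)"
  proof -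
    have "b * (F - u) = (b * F + s) - (b * u + s)" by (simp add: algebra_simps)
    also have "\<dots> = (a * u + r) - (a * v + r)" using u v \<pi>F by simp
    finally show ?thesis by (simp add: algebra_simps)
  qed
  have e2: "a * (F - v) = b * (v - u)"
  proof -
    have "a * (F - v) = (a * F + r) - (a * v + r)" by (simp add: algebra_simps)
    also have "\<dots> = (b * v + s) - (b * u + s)" using u v \<sigma>F by simp
    finally show ?thesis by (simp add: algebra_simps)
  qed
  have "(u - v) * (a^2 + a * b + b^2) = a * (a * (u - v) - b * (F - u)) + b * (a * (F - v) - b * (v - u))"
    by (simp add: algebra_simps power2_eq_square)
  hence "a^2 + a * b + b^2 = 0" using e1 e2 uv by simp
  thus ?thesis using b0 by (simp add: field_simps power2_eq_square)
qed

lemma inverse_root_x2_x_1: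
  fixes u :: "'a::field"
  assumes "u^2 + u + 1 = 0"
  shows "1 / u = - u - 1"
proof -
  have "u * (- u - 1) = 1 - (u^2 + u + 1)" by (simp add: algebra_simps power2_eq_square)
  hence "u * (- u - 1) = 1" using assms by simp
  moreover from this have "u \<noteq> 0" by auto
  ultimately show ?thesis by (simp add: field_simps)
qed

lemma roots_x2_x_1:
  fixes u t :: "'a::field"
  assumes u: "u^2 + u + 1 = 0"
  shows "(1 / u)^2 + 1 / u + 1 = 0" and "t^2 + t + 1 = 0 \<Longrightarrow> t = u \<or> t = 1 / u"
    and "(3::'a) \<noteq> 0 \<Longrightarrow> u \<noteq> 1 / u"
proof -
  note recip = inverse_root_x2_x_1[OF u]
  show "(1 / u)^2 + 1 / u + 1 = 0" unfolding recip using u by (simp add: algebra_simps power2_eq_square)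
  show "t = u \<or> t = 1 / u" if "t^2 + t + 1 = 0"
  proof -
    have "(t - u) * (t - (- u - 1)) = (t^2 + t + 1) - (u^2 + u + 1)"
      by (simp add: algebra_simps power2_eq_square)
    thus ?thesis using that u unfolding recip by simp
  qed
  show "u \<noteq> 1 / u" if "(3::'a) \<noteq> 0"
  proof
    assume "u = 1 / u"
    hence "2 * u + 1 = 0" unfolding recip by (simp add: algebra_simps)
    hence "(2 * u + 1)^2 - 4 * (u^2 + u + 1) = 0" using u by simp
    moreover have "(2 * u + 1)^2 - 4 * (u^2 + u + 1) = - 3"
      by (simp add: algebra_simps power2_eq_square)
    ultimately show False using that by simp
  qed
qed

theorem lemma4:
  fixes F a b r s :: "'a::{field,finite}"
  assumes q_mod: "card (UNIV :: 'a set) mod 3 = 1"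
    and a0: "a \<noteq> 0" and b0: "b \<noteq> 0"
  defines "\<sigma> \<equiv> (\<lambda>x. a * x + r)" and "\<pi> \<equiv> (\<lambda>x. b * x + s)"
  shows "(a \<noteq> b \<longrightarrow> hd \<pi> \<sigma> = card (UNIV :: 'a set) - 1)
    \<and> (\<pi> F = F \<longrightarrow> (\<forall>\<tau>\<in>AGL. \<not> CA_adj F \<pi> \<tau>))
    \<and> card {p \<in> AGL. p F = F} = card (UNIV :: 'a set) - 1
    \<and> (CA_adj F \<pi> \<sigma> \<longrightarrow>
         hd \<pi> \<sigma> = card (UNIV :: 'a set) - 1
       \<and> hd (contr F \<pi>) (contr F \<sigma>) = hd \<pi> \<sigma> - 3
       \<and> a / b \<noteq> b / a
       \<and> (a / b)^2 + a / b + 1 = 0 \<and> (b / a)^2 + b / a + 1 = 0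
       \<and> (\<forall>t. t^2 + t + 1 = 0 \<longrightarrow> t = a / b \<or> t = b / a))"
proof (intro conjI impI)
  have q4: "card (UNIV :: 'a set) \<ge> 4" by (rule card_ge_4_if_card_mod_3[OF q_mod])
  show "a \<noteq> b \<Longrightarrow> hd \<pi> \<sigma> = card (UNIV :: 'a set) - 1"
    unfolding \<pi>_def \<sigma>_def by (rule hd_affine_if_slopes_neq)
  show "\<forall>\<tau>\<in>AGL. \<not> CA_adj F \<pi> \<tau>" if "\<pi> F = F"
    using CA_adj_swaps_preimages(2)[OF q4] inv_f_eq[OF inj_affine[OF b0] that[unfolded \<pi>_def]]
    unfolding \<pi>_def by blast
  show "card {p \<in> AGL. p F = F} = card (UNIV :: 'a set) - 1" by (rule card_AGL_fixing)
  assume adj: "CA_adj F \<pi> \<sigma>"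
  show hd1: "hd \<pi> \<sigma> = card (UNIV :: 'a set) - 1"
    using CA_adj_swaps_preimages(1)[OF q4 adj] unfolding hd_eq_card_diff_agree by simp
  show "hd (contr F \<pi>) (contr F \<sigma>) = hd \<pi> \<sigma> - 3"
    using adj hd1 unfolding CA_adj_def by simp
  have root: "(a / b)^2 + a / b + 1 = 0"
    using CA_adj_swaps_preimages(3-5)[OF q4 adj]
    by (intro slope_ratio_root_if_swap_preimages[of b "(F - s) / b" "(F - r) / a" s F a r])
      (auto simp: \<pi>_def \<sigma>_def inv_affine a0 b0)
  have "(3::'a) \<noteq> 0" using of_nat_neq_0_if_card_mod_eq_1[OF q_mod] by simp
  with roots_x2_x_1[OF root] root
  show "a / b \<noteq> b / a" "(a / b)^2 + a / b + 1 = 0" "(b / a)^2 + b / a + 1 = 0"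
    "\<forall>t. t^2 + t + 1 = 0 \<longrightarrow> t = a / b \<or> t = b / a"
    by auto
qed

end
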